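(* Let $\rho$ be the real number (with $\rho\in(0.6543,0.6632)$) such that \[ \int_0^1\prod_{0\leq k<\lambda}\left|\sin(2^k\pi\theta)\right|\,d\theta\asymp\rho^\lambda \] for all integers $\lambda\geq 0$. Then, uniformly for real $z\geq 1$, \[ \int_0^1\sup_{x\geq 0}\left|\sum_{x<m\leq x+z}(-1)^{s_2(m)}e(m\theta)\right|\,d\theta\ll z^{1+\frac{\log\rho}{\log 2}}. \]
   Context: $s_2(m)$ denotes the sum of the binary digits of the nonnegative integer $m$; $e(x)=e^{2\pi i x}$; the sum ranges over integers $m$ in $(x,x+z]$. The existence of $\rho$ with the stated property and bounds is a known result of Fouvry and Mauduit; $A\asymp B$ means $A\ll B$ and $B\ll A$ with constants independent of $\lambda$, and $\ll$ has an absolute implied constant independent of $z$. *)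

theory Defs
  imports "HOL-Analysis.Analysis"
begin

fun s2 :: "nat \<Rightarrow> nat" where
  "s2 m = (if m = 0 then 0 else m mod 2 + s2 (m div 2))"

definition e :: "real \<Rightarrow> complex" where
  "e x = exp (2 * of_real pi * \<i> * of_real x)"

text \<open>The exponential sum over integers m in (x, x+z] (for x \<ge> 0 these are naturals).\<close>
definition S :: "real \<Rightarrow> real \<Rightarrow> real \<Rightarrow> complex" where
  "S x z \<theta> = (\<Sum>m\<in>{m::nat. x < real m \<and> real m \<le> x + z}. (-1) ^ s2 m * e (real m * \<theta>))"

definition P :: "nat \<Rightarrow> real" where
  "P l = integral {0..1} (\<lambda>\<theta>. \<Prod>k<l. \<bar>sin (2 ^ k * pi * \<theta>)\<bar>)"

end

theory Submission
  imports Defs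
begin

text \<open>Since s2(2m) = s2(m) and s2(2m+1) = s2(m) + 1, the sum of (-1)^s2(m) e(m t) over
  2a \<le> m < 2b equals (1 - e(t)) times the sum over a \<le> m < b at 2t, and |1 - e(t)| = 2|sin(pi t)|.
  Peeling off at most one term at each end and iterating, every such sum of length at most 2^k,
  wherever it starts, is bounded by G_k(t) = sum_{j \<le> k} 2^(j+1) prod_{i<j} |sin(2^i pi t)|.
  So the supremum over x is at most G_k, whose integral is sum_{j \<le> k} 2^(j+1) P(j) \<lless> (2 rho)^k
  because 2 rho > 1. Choosing 2^k \<asymp> z gives z^(log_2(2 rho)), the claimed exponent.\<close>

declare s2.simps[simp del]

lemma s2_0 [simp]: "s2 0 = 0"
  by (subst s2.simps) simp

lemma s2_double: "s2 (2 * n) = s2 n"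
  by (subst s2.simps) simp

lemma s2_double_Suc: "s2 (2 * n + 1) = Suc (s2 n)"
  by (subst s2.simps) simp

lemma e_add: "e (x + y) = e x * e y"
  unfolding e_def by (simp add: distrib_left exp_add)

lemma norm_e [simp]: "norm (e x) = 1"
  unfolding e_def by simp

lemma norm_one_minus_e: "norm (1 - e x) = 2 * \<bar>sin (pi * x)\<bar>"
proof -
  define t where "t = pi * x"
  have e_cis: "e x = cis (2 * t)"
    unfolding e_def t_def cis_conv_exp by (simp add: mult_ac)
  have sin_double_sq: "(sin (2 * t))\<^sup>2 = 4 * (sin t)\<^sup>2 * (1 - (sin t)\<^sup>2)"
    unfolding sin_double by (simp add: power_mult_distrib cos_squared_eq)
  have "(norm (1 - e x))\<^sup>2 = (1 - cos (2 * t))\<^sup>2 + (sin (2 * t))\<^sup>2"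
    unfolding e_cis by (simp add: cmod_power2)
  also have "\<dots> = (2 * \<bar>sin t\<bar>)\<^sup>2"
    unfolding sin_double_sq cos_double_sin by (simp add: power2_eq_square algebra_simps)
  finally show ?thesis
    unfolding t_def by (metis abs_ge_zero norm_ge_zero power2_eq_iff_nonneg zero_le_mult_iff zero_le_numeral)
qed

definition thue_morse_sum :: "nat \<Rightarrow> nat \<Rightarrow> real \<Rightarrow> complex" where
  "thue_morse_sum a b \<theta> = (\<Sum>m\<in>{a..<b}. (-1) ^ s2 m * e (real m * \<theta>))"

lemma thue_morse_sum_split: "a \<le> m \<Longrightarrow> m \<le> b \<Longrightarrow> thue_morse_sum a b \<theta> = thue_morse_sum a m \<theta> + thue_morse_sum m b \<theta>"
  unfolding thue_morse_sum_def by (simp add: sum.atLeastLessThan_concat)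

lemma thue_morse_sum_double: "thue_morse_sum (2 * a) (2 * b) \<theta> = (1 - e \<theta>) * thue_morse_sum a b (2 * \<theta>)"
proof (induction b)
  case 0
  then show ?case by (simp add: thue_morse_sum_def)
next
  case (Suc b)
  show ?case
  proof (cases "b < a")
    case True
    then show ?thesis by (simp add: thue_morse_sum_def)
  next
    case False
    have "thue_morse_sum (2 * a) (2 * Suc b) \<theta> = thue_morse_sum (2 * a) (2 * b) \<theta>
        + (-1) ^ s2 (2 * b) * e (real (2 * b) * \<theta>) + (-1) ^ s2 (2 * b + 1) * e (real (2 * b + 1) * \<theta>)"
      using False by (simp add: thue_morse_sum_def)
    also have "\<dots> = thue_morse_sum (2 * a) (2 * b) \<theta> + (1 - e \<theta>) * ((-1) ^ s2 b * e (real b * (2 * \<theta>)))"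
      unfolding s2_double s2_double_Suc by (simp add: algebra_simps e_add[symmetric])
    also have "\<dots> = (1 - e \<theta>) * thue_morse_sum a (Suc b) (2 * \<theta>)"
      using False Suc by (simp add: thue_morse_sum_def algebra_simps)
    finally show ?thesis .
  qed
qed

lemma norm_thue_morse_sum_le: "norm (thue_morse_sum a b \<theta>) \<le> real (b - a)"
proof -
  have "norm (thue_morse_sum a b \<theta>) \<le> (\<Sum>m\<in>{a..<b}. norm ((-1::complex) ^ s2 m * e (real m * \<theta>)))"
    unfolding thue_morse_sum_def by (rule norm_sum)
  also have "\<dots> = real (b - a)" by (simp add: norm_mult norm_power)
  finally show ?thesis .
qed

lemma continuous_on_thue_morse_sum: "continuous_on A (thue_morse_sum a b)"
  unfolding thue_morse_sum_def e_def by (intro continuous_intros)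

definition sin_prod :: "nat \<Rightarrow> real \<Rightarrow> real" where
  "sin_prod l \<theta> = (\<Prod>k<l. \<bar>sin (2 ^ k * pi * \<theta>)\<bar>)"

definition thue_morse_majorant :: "nat \<Rightarrow> real \<Rightarrow> real" where
  "thue_morse_majorant k \<theta> = (\<Sum>j\<le>k. 2 ^ Suc j * sin_prod j \<theta>)"

lemma sin_prod_Suc: "sin_prod (Suc j) \<theta> = \<bar>sin (pi * \<theta>)\<bar> * sin_prod j (2 * \<theta>)"
  unfolding sin_prod_def prod.lessThan_Suc_shift by (simp add: mult_ac)

lemma sin_prod_nonneg: "sin_prod j \<theta> \<ge> 0"
  unfolding sin_prod_def by (simp add: prod_nonneg)

lemma continuous_on_sin_prod: "continuous_on A (sin_prod j)"
  unfolding sin_prod_def by (intro continuous_intros)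

lemma thue_morse_majorant_Suc:
  "thue_morse_majorant (Suc k) \<theta> = 2 + 2 * \<bar>sin (pi * \<theta>)\<bar> * thue_morse_majorant k (2 * \<theta>)"
  unfolding thue_morse_majorant_def sum.atMost_Suc_shift sin_prod_Suc
  by (simp add: sin_prod_def sum_distrib_left mult_ac)

lemma thue_morse_majorant_nonneg: "thue_morse_majorant k \<theta> \<ge> 0"
  unfolding thue_morse_majorant_def by (intro sum_nonneg mult_nonneg_nonneg sin_prod_nonneg) auto

lemma continuous_on_thue_morse_majorant: "continuous_on A (thue_morse_majorant k)"
  unfolding thue_morse_majorant_def by (intro continuous_intros continuous_on_sin_prod)

lemma integral_thue_morse_majorant:
  "integral {0..1} (thue_morse_majorant k) = (\<Sum>j\<le>k. 2 ^ Suc j * P j)"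
proof -
  have "integral {0..1} (thue_morse_majorant k) = (\<Sum>j\<le>k. integral {0..1} (\<lambda>\<theta>. 2 ^ Suc j * sin_prod j \<theta>))"
    unfolding thue_morse_majorant_def
    by (rule integral_sum)
       (auto intro!: integrable_continuous_real continuous_intros continuous_on_sin_prod)
  then show ?thesis
    unfolding P_def sin_prod_def by simp
qed

lemma norm_thue_morse_sum_le_majorant:
  "b \<le> a + 2 ^ k \<Longrightarrow> norm (thue_morse_sum a b \<theta>) \<le> thue_morse_majorant k \<theta>"
proof (induction k arbitrary: a b \<theta>)
  case 0
  then show ?case
    using norm_thue_morse_sum_le[of a b \<theta>] by (simp add: thue_morse_majorant_def sin_prod_def)
next
  case (Suc k)
  have majorant_ge_2: "thue_morse_majorant (Suc k) \<theta> \<ge> 2"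
    unfolding thue_morse_majorant_Suc using thue_morse_majorant_nonneg[of k "2 * \<theta>"] by simp
  show ?case
  proof (cases "b \<le> a + 1")
    case True
    then show ?thesis using norm_thue_morse_sum_le[of a b \<theta>] majorant_ge_2 by simp
  next
    case False
    define a' where "a' = (a + 1) div 2"
    define b' where "b' = b div 2"
    have bounds: "a \<le> 2 * a'" "2 * a' \<le> a + 1" "2 * a' \<le> 2 * b'" "2 * b' \<le> b" "b \<le> 2 * b' + 1"
      using False unfolding a'_def b'_def by auto
    have split: "thue_morse_sum a b \<theta> = thue_morse_sum a (2 * a') \<theta>
        + (1 - e \<theta>) * thue_morse_sum a' b' (2 * \<theta>) + thue_morse_sum (2 * b') b \<theta>"
      using bounds
      by (simp add: thue_morse_sum_split[of a "2 * a'" b] thue_morse_sum_split[of "2 * a'" "2 * b'" b]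
          thue_morse_sum_double add.assoc)
    have "norm (thue_morse_sum a b \<theta>) \<le> norm (thue_morse_sum a (2 * a') \<theta>)
        + norm ((1 - e \<theta>) * thue_morse_sum a' b' (2 * \<theta>)) + norm (thue_morse_sum (2 * b') b \<theta>)"
      unfolding split by (intro norm_triangle_le add_mono norm_triangle_ineq order_refl)
    moreover have "norm (thue_morse_sum a (2 * a') \<theta>) \<le> 1" "norm (thue_morse_sum (2 * b') b \<theta>) \<le> 1"
      using norm_thue_morse_sum_le[of a "2 * a'" \<theta>] norm_thue_morse_sum_le[of "2 * b'" b \<theta>] bounds by simp_all
    moreover have "norm ((1 - e \<theta>) * thue_morse_sum a' b' (2 * \<theta>))
        \<le> 2 * \<bar>sin (pi * \<theta>)\<bar> * thue_morse_majorant k (2 * \<theta>)"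
      unfolding norm_mult norm_one_minus_e using Suc.prems bounds Suc.IH[of b' a' "2 * \<theta>"]
      by (intro mult_left_mono) auto
    ultimately show ?thesis unfolding thue_morse_majorant_Suc by linarith
  qed
qed

lemma S_eq_thue_morse_sum:
  assumes "x \<ge> 0" "z \<ge> 0"
  shows "S x z \<theta> = thue_morse_sum (nat \<lfloor>x\<rfloor> + 1) (nat \<lfloor>x + z\<rfloor> + 1) \<theta>"
proof -
  have floors: "0 \<le> \<lfloor>x\<rfloor>" "0 \<le> \<lfloor>x + z\<rfloor>"
    using assms by simp_all
  have "x < real m \<and> real m \<le> x + z \<longleftrightarrow> m \<in> {nat \<lfloor>x\<rfloor> + 1..<nat \<lfloor>x + z\<rfloor> + 1}" for m
  proof -
    have "x < real m \<and> real m \<le> x + z \<longleftrightarrow> \<lfloor>x\<rfloor> < int m \<and> int m \<le> \<lfloor>x + z\<rfloor>"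
      by (simp add: floor_less_iff le_floor_iff)
    also have "\<dots> \<longleftrightarrow> m \<in> {nat \<lfloor>x\<rfloor> + 1..<nat \<lfloor>x + z\<rfloor> + 1}"
      using floors by (auto simp del: zero_le_floor)
    finally show ?thesis .
  qed
  then have "{m. x < real m \<and> real m \<le> x + z} = {nat \<lfloor>x\<rfloor> + 1..<nat \<lfloor>x + z\<rfloor> + 1}"
    by blast
  then show ?thesis
    unfolding S_def thue_morse_sum_def by simp
qed

lemma norm_S_le_majorant:
  assumes "x \<ge> 0" "z \<ge> 0" "z + 1 \<le> 2 ^ k"
  shows "cmod (S x z \<theta>) \<le> thue_morse_majorant k \<theta>"
proof -
  have "real_of_int \<lfloor>x + z\<rfloor> < real_of_int \<lfloor>x\<rfloor> + 2 ^ k"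
    using assms of_int_floor_le[of "x + z"] real_of_int_floor_add_one_gt[of x] by linarith
  then have "real_of_int \<lfloor>x + z\<rfloor> < real_of_int (\<lfloor>x\<rfloor> + 2 ^ k)"
    by simp
  then have "\<lfloor>x + z\<rfloor> < \<lfloor>x\<rfloor> + 2 ^ k"
    by (simp only: of_int_less_iff)
  moreover have "0 \<le> \<lfloor>x\<rfloor>"
    using assms by simp
  ultimately have "nat \<lfloor>x + z\<rfloor> \<le> nat (\<lfloor>x\<rfloor> + int (2 ^ k))"
    by (intro nat_mono) simp
  also have "\<dots> = nat \<lfloor>x\<rfloor> + 2 ^ k"
    using \<open>0 \<le> \<lfloor>x\<rfloor>\<close> by (simp add: nat_add_distrib)
  finally have "nat \<lfloor>x + z\<rfloor> + 1 \<le> nat \<lfloor>x\<rfloor> + 1 + 2 ^ k"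
    by simp
  then show ?thesis
    using S_eq_thue_morse_sum[of x z \<theta>] assms norm_thue_morse_sum_le_majorant by simp
qed

lemma integrable_on_SUP_bounded:
  fixes f :: "'a \<Rightarrow> real \<Rightarrow> real"
  assumes A: "A \<in> sets lebesgue" and countable: "countable (f ` X)" and "X \<noteq> {}"
    and cont: "\<And>x. x \<in> X \<Longrightarrow> continuous_on A (f x)"
    and nonneg: "\<And>x t. x \<in> X \<Longrightarrow> 0 \<le> f x t"
    and bound: "\<And>x t. x \<in> X \<Longrightarrow> f x t \<le> g t"
    and g: "g integrable_on A"
  shows "(\<lambda>t. SUP x\<in>X. f x t) integrable_on A"
    and "integral A (\<lambda>t. SUP x\<in>X. f x t) \<le> integral A g"
proof -
  have bdd: "bdd_above ((\<lambda>x. f x t) ` X)" for t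
    using bound by (intro bdd_aboveI2)
  have SUP_le: "(SUP x\<in>X. f x t) \<le> g t" for t
    using \<open>X \<noteq> {}\<close> bound by (intro cSUP_least) auto
  have SUP_nonneg: "0 \<le> (SUP x\<in>X. f x t)" for t
  proof -
    obtain x where "x \<in> X" using \<open>X \<noteq> {}\<close> by blast
    then show ?thesis
      using nonneg[of x t] cSUP_upper[OF _ bdd, of x t] by linarith
  qed
  have "(\<lambda>t. SUP h\<in>f ` X. h t) \<in> borel_measurable (lebesgue_on A)"
  proof (rule borel_measurable_cSUP)
    show "h \<in> borel_measurable (lebesgue_on A)" if "h \<in> f ` X" for h
      using that cont A by (auto intro: continuous_imp_measurable_on_sets_lebesgue)
    show "bdd_above ((\<lambda>h. h t) ` f ` X)" for t
      using bdd[of t] by (simp add: image_image)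
  qed (rule countable)
  then have measurable: "(\<lambda>t. SUP x\<in>X. f x t) \<in> borel_measurable (lebesgue_on A)"
    by (simp add: image_image)
  have "norm (SUP x\<in>X. f x t) \<le> g t" for t
    using SUP_nonneg[of t] SUP_le[of t] by simp
  then show integrable: "(\<lambda>t. SUP x\<in>X. f x t) integrable_on A"
    using measurable_bounded_by_integrable_imp_integrable[OF measurable g _ A] by blast
  show "integral A (\<lambda>t. SUP x\<in>X. f x t) \<le> integral A g"
    using integrable g SUP_le by (rule integral_le)
qed

lemma integrable_on_SUP_norm_S:
  assumes "z \<ge> 0" "z + 1 \<le> 2 ^ k"
  shows "(\<lambda>\<theta>. SUP x\<in>{0::real..}. cmod (S x z \<theta>)) integrable_on {0..1}"
    and "integral {0..1} (\<lambda>\<theta>. SUP x\<in>{0::real..}. cmod (S x z \<theta>)) \<le> integral {0..1} (thue_morse_majorant k)"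
proof -
  have S_norm_eq: "(\<lambda>\<theta>. cmod (S x z \<theta>)) = (\<lambda>\<theta>. cmod (thue_morse_sum (nat \<lfloor>x\<rfloor> + 1) (nat \<lfloor>x + z\<rfloor> + 1) \<theta>))"
    if "x \<in> {0..}" for x
    using that assms by (simp add: S_eq_thue_morse_sum)
  have "(\<lambda>x \<theta>. cmod (S x z \<theta>)) ` {0..} \<subseteq> (\<lambda>(a, b) \<theta>. cmod (thue_morse_sum a b \<theta>)) ` UNIV"
  proof (rule image_subsetI)
    fix x :: real
    assume x: "x \<in> {0..}"
    show "(\<lambda>\<theta>. cmod (S x z \<theta>)) \<in> (\<lambda>(a, b) \<theta>. cmod (thue_morse_sum a b \<theta>)) ` UNIV"
      unfolding S_norm_eq[OF x]
      by (rule image_eqI[where x = "(nat \<lfloor>x\<rfloor> + 1, nat \<lfloor>x + z\<rfloor> + 1)"]) simp_all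
  qed
  then have countable: "countable ((\<lambda>x \<theta>. cmod (S x z \<theta>)) ` {0..})"
    by (rule countable_subset) simp
  have cont: "continuous_on {0..1} (\<lambda>\<theta>. cmod (S x z \<theta>))" if "x \<in> {0..}" for x
    unfolding S_norm_eq[OF that] by (intro continuous_on_norm continuous_on_thue_morse_sum)
  have bound: "cmod (S x z \<theta>) \<le> thue_morse_majorant k \<theta>" if "x \<in> {0..}" for x \<theta>
    using that assms by (simp add: norm_S_le_majorant)
  have majorant: "thue_morse_majorant k integrable_on {0..1}"
    by (intro integrable_continuous_real continuous_on_thue_morse_majorant)
  have "{0..1::real} \<in> sets lebesgue" "{0::real..} \<noteq> {}"
    by simp_all
  note SUP_bounded = integrable_on_SUP_bounded[OF this(1) countable this(2) cont norm_ge_zero bound majorant]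
  show "(\<lambda>\<theta>. SUP x\<in>{0::real..}. cmod (S x z \<theta>)) integrable_on {0..1}"
    by (rule SUP_bounded(1))
  show "integral {0..1} (\<lambda>\<theta>. SUP x\<in>{0::real..}. cmod (S x z \<theta>)) \<le> integral {0..1} (thue_morse_majorant k)"
    by (rule SUP_bounded(2))
qed

lemma sum_pow2_mult_le_geometric:
  fixes a :: "nat \<Rightarrow> real"
  assumes a: "\<And>j. a j \<le> c * \<rho> ^ j" and "c \<ge> 0" and "2 * \<rho> > 1"
  shows "(\<Sum>j\<le>k. 2 ^ Suc j * a j) \<le> 2 * c * (2 * \<rho>) / (2 * \<rho> - 1) * (2 * \<rho>) ^ k"
proof -
  define r where "r = 2 * \<rho>"
  have "r > 1" using assms unfolding r_def by simp
  have "(\<Sum>j\<le>k. 2 ^ Suc j * a j) \<le> (\<Sum>j\<le>k. 2 ^ Suc j * (c * \<rho> ^ j))"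
    using a by (intro sum_mono mult_left_mono) auto
  also have "\<dots> = 2 * c * (\<Sum>j<Suc k. r ^ j)"
    unfolding r_def by (simp add: sum_distrib_left lessThan_Suc_atMost power_mult_distrib mult_ac)
  also have "\<dots> = 2 * c * ((r ^ Suc k - 1) / (r - 1))"
    using \<open>r > 1\<close> by (subst geometric_sum) auto
  also have "\<dots> \<le> 2 * c * (r ^ Suc k / (r - 1))"
    using \<open>r > 1\<close> \<open>c \<ge> 0\<close> by (intro mult_left_mono divide_right_mono) auto
  also have "\<dots> = 2 * c * r / (r - 1) * r ^ k"
    by simp
  finally show ?thesis
    unfolding r_def .
qed

lemma power_eq_pow2_powr_log2:
  assumes "y > 0"
  shows "y ^ k = (2 ^ k) powr log 2 y"
proof -
  have "(2 ^ k) powr log 2 y = (2 powr log 2 y) powr real k"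
    by (simp add: powr_realpow[symmetric] powr_powr mult.commute)
  also have "\<dots> = y ^ k"
    using assms by (simp add: powr_realpow)
  finally show ?thesis ..
qed

lemma exists_pow2_between:
  assumes "z \<ge> (1::real)"
  obtains k :: nat where "z + 1 \<le> 2 ^ k" and "2 ^ k \<le> 4 * z"
proof -
  obtain k0 :: nat where "2 * z < 2 ^ k0"
    using real_arch_pow[of 2 "2 * z"] by auto
  then obtain k where k: "2 * z \<le> 2 ^ k" and least: "\<And>m. m < k \<Longrightarrow> \<not> 2 * z \<le> 2 ^ m"
    using exists_least_iff[of "\<lambda>k. 2 * z \<le> (2::real) ^ k"] by (auto intro: less_imp_le)
  have "k \<noteq> 0"
    using assms least[of 0] k by (cases k) auto
  then obtain k' where "k = Suc k'"
    using not0_implies_Suc by blast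
  then have "2 ^ k \<le> 4 * z"
    using least[of k'] by simp
  moreover have "z + 1 \<le> 2 ^ k"
    using assms k by simp
  ultimately show ?thesis
    using that by blast
qed

lemma integral_thue_morse_majorant_le_powr:
  assumes P_le: "\<And>l. P l \<le> c * \<rho> ^ l" and "c \<ge> 0" and "2 * \<rho> > 1"
    and "z > 0" and "2 ^ k \<le> 4 * z"
  shows "integral {0..1} (thue_morse_majorant k)
    \<le> 2 * c * (2 * \<rho>) / (2 * \<rho> - 1) * 4 powr log 2 (2 * \<rho>) * z powr log 2 (2 * \<rho>)"
proof -
  define K where "K = 2 * c * (2 * \<rho>) / (2 * \<rho> - 1)"
  have "K \<ge> 0" and "log 2 (2 * \<rho>) \<ge> 0"
    unfolding K_def using assms by simp_all
  have "integral {0..1} (thue_morse_majorant k) \<le> K * (2 * \<rho>) ^ k"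
    unfolding integral_thue_morse_majorant K_def
    using assms by (intro sum_pow2_mult_le_geometric[OF P_le]) simp_all
  also have "\<dots> = K * (2 ^ k) powr log 2 (2 * \<rho>)"
    using assms power_eq_pow2_powr_log2[of "2 * \<rho>" k] by simp
  also have "\<dots> \<le> K * (4 * z) powr log 2 (2 * \<rho>)"
    using \<open>K \<ge> 0\<close> \<open>log 2 (2 * \<rho>) \<ge> 0\<close> assms by (intro mult_left_mono powr_mono2) auto
  also have "\<dots> = K * 4 powr log 2 (2 * \<rho>) * z powr log 2 (2 * \<rho>)"
    using \<open>z > 0\<close> by (simp add: powr_mult)
  finally show ?thesis
    unfolding K_def .
qed

theorem proposition2:
  fixes \<rho> :: real
  assumes "0.6543 < \<rho>" and "\<rho> < 0.6632"
    and "\<exists>c1 c2. 0 < c1 \<and> 0 < c2 \<and>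
           (\<forall>l::nat. c1 * \<rho> ^ l \<le> P l \<and> P l \<le> c2 * \<rho> ^ l)"
  shows "\<exists>C. \<forall>z::real. z \<ge> 1 \<longrightarrow>
           (\<lambda>\<theta>. SUP x\<in>{0::real..}. cmod (S x z \<theta>)) integrable_on {0..1} \<and>
           integral {0..1} (\<lambda>\<theta>. SUP x\<in>{0::real..}. cmod (S x z \<theta>))
             \<le> C * z powr (1 + ln \<rho> / ln 2)"
proof -
  obtain c where "c > 0" and P_le: "\<And>l. P l \<le> c * \<rho> ^ l"
    using assms(3) by blast
  have "2 * \<rho> > 1"
    using assms(1) by simp
  then have exponent: "1 + ln \<rho> / ln 2 = log 2 (2 * \<rho>)"
    by (simp add: log_def ln_mult divide_simps)
  show ?thesis
  proof (intro exI allI impI conjI)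
    fix z :: real
    assume "z \<ge> 1"
    then obtain k where k: "z + 1 \<le> 2 ^ k" "2 ^ k \<le> 4 * z"
      by (rule exists_pow2_between)
    show "(\<lambda>\<theta>. SUP x\<in>{0::real..}. cmod (S x z \<theta>)) integrable_on {0..1}"
      using integrable_on_SUP_norm_S(1) \<open>z \<ge> 1\<close> k by simp
    have "integral {0..1} (\<lambda>\<theta>. SUP x\<in>{0::real..}. cmod (S x z \<theta>))
        \<le> integral {0..1} (thue_morse_majorant k)"
      using integrable_on_SUP_norm_S(2) \<open>z \<ge> 1\<close> k by simp
    also have "\<dots> \<le> 2 * c * (2 * \<rho>) / (2 * \<rho> - 1) * 4 powr log 2 (2 * \<rho>) * z powr (1 + ln \<rho> / ln 2)"
      unfolding exponent using \<open>c > 0\<close> \<open>2 * \<rho> > 1\<close> \<open>z \<ge> 1\<close> k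
      by (intro integral_thue_morse_majorant_le_powr[OF P_le]) simp_all
    finally show "integral {0..1} (\<lambda>\<theta>. SUP x\<in>{0::real..}. cmod (S x z \<theta>))
        \<le> 2 * c * (2 * \<rho>) / (2 * \<rho> - 1) * 4 powr log 2 (2 * \<rho>) * z powr (1 + ln \<rho> / ln 2)" .
  qed
qed

end
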